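(* Let $X_0$ be a compact conformally hyperbolic Riemann surface. Then every geodesic current on $X_0$ is bounded, i.e. $\mathcal C_{\mathrm{bd}}(X_0)=\mathcal C(X_0)$, and the uniform weak* topology coincides with the weak* topology on this space.
   Context: Conformally hyperbolic: universal cover $\widetilde X_0\cong\mathbb D$, with circle at infinity $\partial_\infty\widetilde X_0$ and space of oriented geodesics $G(\widetilde X_0)=\partial_\infty\widetilde X_0\times\partial_\infty\widetilde X_0-\Delta$, on which $\pi_1(X_0)$ and the group $\mathbf H(\widetilde X_0)$ of biholomorphic self-maps act. $\mathcal C(X_0)$ is the set of geodesic currents: $\pi_1(X_0)$-invariant Radon measures on $G(\widetilde X_0)$. The weak* topology is given by seminorms $|\alpha|_\xi=|\int\xi\,d\alpha|$ for continuous compactly supported $\xi\colon G(\widetilde X_0)\to\mathbb R$. A current is bounded if $\|\alpha\|_\xi=\sup_{\phi\in\mathbf H(\widetilde X_0)}|\int\xi\circ\phi\,d\alpha|<\infty$ for all such $\xi$; $\mathcal C_{\mathrm{bd}}(X_0)$ is the set of bounded currents and the uniform weak* topology is defined by the seminorms $\|\cdot\|_\xi$. *)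

theory Defs
  imports "HOL-Analysis.Analysis" "HOL-Complex_Analysis.Complex_Analysis"
begin

text \<open>Model: the universal cover of X0 is the unit disc; its circle at infinity is
  the unit circle. Biholomorphic self-maps of the disc, taken together with their
  (unique) continuous extension to the closed disc, which gives the boundary action.\<close>

definition disc_auts :: "(complex \<Rightarrow> complex) set" where
  "disc_auts = {f. f holomorphic_on ball 0 1 \<and> bij_betw f (ball 0 1) (ball 0 1)
                   \<and> continuous_on (cball 0 1) f}"

definition geod_space :: "(complex \<times> complex) set" where
  "geod_space = {(x, y). x \<in> sphere 0 1 \<and> y \<in> sphere 0 1 \<and> x \<noteq> y}"

definition geod_act :: "(complex \<Rightarrow> complex) \<Rightarrow> complex \<times> complex \<Rightarrow> complex \<times> complex" where
  "geod_act g = (\<lambda>(x, y). (g x, g y))"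

text \<open>Gamma is the deck group of a compact Riemann surface X0 = D/Gamma:
  a group of disc automorphisms acting freely and properly discontinuously
  on the disc with compact quotient.\<close>
definition cocompact_deck_group :: "(complex \<Rightarrow> complex) set \<Rightarrow> bool" where
  "cocompact_deck_group \<Gamma> \<longleftrightarrow>
     \<Gamma> \<subseteq> disc_auts \<and>
     (\<exists>e\<in>\<Gamma>. \<forall>z\<in>ball 0 1. e z = z) \<and>
     (\<forall>g\<in>\<Gamma>. \<forall>h\<in>\<Gamma>. \<exists>k\<in>\<Gamma>. \<forall>z\<in>ball 0 1. k z = g (h z)) \<and>
     (\<forall>g\<in>\<Gamma>. \<exists>k\<in>\<Gamma>. \<forall>z\<in>ball 0 1. k (g z) = z) \<and>
     (\<forall>g\<in>\<Gamma>. (\<exists>z\<in>ball 0 1. g z = z) \<longrightarrow> (\<forall>z\<in>ball 0 1. g z = z)) \<and>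
     (\<forall>K. compact K \<and> K \<subseteq> ball 0 1 \<longrightarrow>
          finite {restrict g (ball 0 1) | g. g \<in> \<Gamma> \<and> g ` K \<inter> K \<noteq> {}}) \<and>
     (\<exists>K. compact K \<and> K \<subseteq> ball 0 1 \<and> (\<Union>g\<in>\<Gamma>. g ` K) = ball 0 1)"

text \<open>Geodesic currents: Gamma-invariant Radon (= locally finite Borel, G being locally
  compact, second countable) measures on G.\<close>
definition geodesic_currents :: "(complex \<Rightarrow> complex) set \<Rightarrow> (complex \<times> complex) measure set" where
  "geodesic_currents \<Gamma> = {\<alpha>. sets \<alpha> = sets (restrict_space borel geod_space) \<and>
      (\<forall>K. compact K \<and> K \<subseteq> geod_space \<longrightarrow> emeasure \<alpha> K < \<infinity>) \<and>
      (\<forall>g\<in>\<Gamma>. distr \<alpha> \<alpha> (geod_act g) = \<alpha>)}"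

definition cc_test :: "(complex \<times> complex \<Rightarrow> real) \<Rightarrow> bool" where
  "cc_test \<xi> \<longleftrightarrow> continuous_on geod_space \<xi> \<and>
     (\<exists>K. compact K \<and> K \<subseteq> geod_space \<and> (\<forall>p\<in>geod_space - K. \<xi> p = 0))"

definition pairing :: "(complex \<times> complex) measure \<Rightarrow> (complex \<times> complex \<Rightarrow> real) \<Rightarrow> real" where
  "pairing \<alpha> \<xi> = integral\<^sup>L \<alpha> \<xi>"

definition bounded_currents :: "(complex \<Rightarrow> complex) set \<Rightarrow> (complex \<times> complex) measure set" where
  "bounded_currents \<Gamma> = {\<alpha> \<in> geodesic_currents \<Gamma>. \<forall>\<xi>. cc_test \<xi> \<longrightarrow>
      bdd_above ((\<lambda>\<phi>. \<bar>pairing \<alpha> (\<xi> \<circ> geod_act \<phi>)\<bar>) ` disc_auts)}"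

definition weak_star_topology :: "(complex \<times> complex) measure set \<Rightarrow> (complex \<times> complex) measure topology" where
  "weak_star_topology C = topology_generated_by
     {{\<beta> \<in> C. \<bar>pairing \<beta> \<xi> - pairing \<alpha> \<xi>\<bar> < e} | \<alpha> \<xi> e. \<alpha> \<in> C \<and> cc_test \<xi> \<and> e > 0}"

definition uniform_weak_star_topology :: "(complex \<times> complex) measure set \<Rightarrow> (complex \<times> complex) measure topology" where
  "uniform_weak_star_topology C = topology_generated_by
     {{\<beta> \<in> C. (SUP \<phi>\<in>disc_auts. \<bar>pairing \<beta> (\<xi> \<circ> geod_act \<phi>) - pairing \<alpha> (\<xi> \<circ> geod_act \<phi>)\<bar>) < e}
       | \<alpha> \<xi> e. \<alpha> \<in> C \<and> cc_test \<xi> \<and> e > 0}"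

end

theory Submission
  imports Defs
begin

text \<open>Every automorphism of the disc is a Moebius map z \<mapsto> u (z - a) / (1 - cnj a z) with
  |u| = 1 and |a| < 1. Precomposing with a deck transformation moves a into a compact set K whose
  translates cover the disc, and does not change the pairing of \<xi> \<circ> \<phi> with a current. So each
  uniform seminorm is a supremum over the compact set of parameters (u, k) with |u| = 1, k \<in> K.
  All these translates of \<xi> are supported in one compact set L, which bounds them by
  sup |\<xi>| times the mass of L; and they form a compact, hence totally bounded, family in the sup
  norm, so finitely many weak* conditions, together with one test function dominating the
  indicator of L, control the whole supremum.\<close>

lemma borel_measurable_continuous_on_space:
  assumes "sets M = sets (restrict_space borel S)" "continuous_on S f"
  shows "f \<in> borel_measurable M"
  using borel_measurable_continuous_on_restrict[OF assms(2)]
  by (subst measurable_cong_sets[OF assms(1) refl])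

lemma measurable_continuous_self_map:
  assumes "sets M = sets (restrict_space borel S)" "continuous_on S T" "T ` S \<subseteq> S"
  shows "T \<in> measurable M M"
proof -
  have "T \<in> measurable (restrict_space borel S) (restrict_space borel S)"
    by (rule measurable_restrict_space2)
       (use borel_measurable_continuous_on_restrict[OF assms(2)] assms(3) in \<open>auto simp: space_restrict_space\<close>)
  then show ?thesis
    using measurable_cong_sets[OF assms(1) assms(1)] by simp
qed

lemma integral_bounded_compact_support:
  fixes f :: "'a::t2_space \<Rightarrow> real"
  assumes sets: "sets M = sets (restrict_space borel S)"
    and L: "compact L" "L \<subseteq> S" "emeasure M L < \<infinity>"
    and f: "continuous_on S f" "\<And>p. p \<in> S - L \<Longrightarrow> f p = 0" "\<And>p. p \<in> S \<Longrightarrow> \<bar>f p\<bar> \<le> B"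
  shows "integrable M f" "\<bar>integral\<^sup>L M f\<bar> \<le> B * measure M L"
proof -
  have space: "space M = S"
    using sets_eq_imp_space_eq[OF sets] by (simp add: space_restrict_space)
  have "L \<in> sets borel"
    using L(1) by (rule borel_compact)
  then have "S \<inter> L \<in> sets (restrict_space borel S)"
    by (auto simp: sets_restrict_space)
  then have L_sets: "L \<in> sets M"
    using L(2) sets by (simp add: Int_absorb1)
  have dom: "integrable M (\<lambda>x. B * indicator L x)"
    using L_sets L(3) by (intro integrable_mult_right integrable_real_indicator)
  have bound: "\<bar>f x\<bar> \<le> B * indicator L x" if "x \<in> space M" for x
    using that f(2,3) space by (cases "x \<in> L") auto
  show int: "integrable M f"
  proof (rule Bochner_Integration.integrable_bound[OF dom borel_measurable_continuous_on_space[OF sets f(1)]])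
    show "AE x in M. norm (f x) \<le> norm (B * indicator L x :: real)"
      using bound by (intro AE_I2) fastforce
  qed
  have "\<bar>integral\<^sup>L M f\<bar> \<le> integral\<^sup>L M (\<lambda>x. \<bar>f x\<bar>)"
    using integral_norm_bound[of M f] by simp
  also have "\<dots> \<le> integral\<^sup>L M (\<lambda>x. B * indicator L x)"
    by (rule integral_mono) (use integrable_abs[OF int] dom bound in auto)
  also have "\<dots> = B * measure M L"
    using L_sets by (simp add: Int_absorb2 sets.sets_into_space)
  finally show "\<bar>integral\<^sup>L M f\<bar> \<le> B * measure M L" .
qed

lemma bump_above_indicator:
  fixes L S X :: "'a::heine_borel set"
  assumes "compact X" "S \<subseteq> X" "closed (X - S)" "compact L" "L \<subseteq> S"
  obtains f :: "'a \<Rightarrow> real" and C where "continuous_on S f" "compact C" "C \<subseteq> S"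
    "\<And>p. p \<in> S - C \<Longrightarrow> f p = 0" "\<And>p. p \<in> S \<Longrightarrow> indicator L p \<le> f p"
proof (cases "L = {}")
  case True
  then show ?thesis
    using that[of "\<lambda>_. 0" "{}"] by simp
next
  case False
  obtain d where d: "d > 0" "\<And>x y. x \<in> L \<Longrightarrow> y \<in> X - S \<Longrightarrow> d \<le> dist x y"
    using separate_compact_closed[OF assms(4,3)] assms(5) by blast
  define C where "C = X \<inter> {p. infdist p L \<le> d / 2}"
  have "compact C"
    unfolding C_def by (intro compact_Int_closed assms(1) closed_Collect_le continuous_intros)
  moreover have "C \<subseteq> S"
  proof
    fix p assume p: "p \<in> C"
    obtain y where y: "y \<in> L" "infdist p L = dist y p"
      using infdist_attains_inf[OF compact_imp_closed[OF assms(4)] False] by (metis dist_commute)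
    show "p \<in> S"
    proof (rule ccontr)
      assume "p \<notin> S"
      then have "d \<le> infdist p L"
        using d(2)[OF y(1)] p y(2) by (simp add: C_def)
      then show False
        using p d(1) by (simp add: C_def)
    qed
  qed
  moreover have "max 0 (1 - 2 * infdist p L / d) = 0" if "p \<in> S - C" for p
  proof -
    have "d / 2 < infdist p L"
      using that assms(2) by (auto simp: C_def)
    then have "1 - 2 * infdist p L / d \<le> 0"
      using d(1) by (simp add: field_simps)
    then show ?thesis
      by simp
  qed
  moreover have "indicator L p \<le> max 0 (1 - 2 * infdist p L / d)" for p
    by (cases "p \<in> L") auto
  moreover have "continuous_on S (\<lambda>p. max 0 (1 - 2 * infdist p L / d))"
    by (intro continuous_intros) (use d(1) in auto)
  ultimately show ?thesis
    using that by blast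
qed

lemma compact_family_finite_net:
  fixes F :: "'a::metric_space \<times> 'b::metric_space \<Rightarrow> 'c::metric_space"
  assumes "compact A" "compact L" "continuous_on (A \<times> L) F" "\<epsilon> > 0"
  obtains N where "finite N" "N \<subseteq> A" "\<And>a. a \<in> A \<Longrightarrow> \<exists>n\<in>N. \<forall>p\<in>L. dist (F (a, p)) (F (n, p)) < \<epsilon>"
proof -
  have "uniformly_continuous_on (A \<times> L) F"
    by (rule compact_uniformly_continuous[OF assms(3) compact_Times[OF assms(1,2)]])
  then obtain \<eta> where \<eta>: "\<eta> > 0"
    and uc: "\<And>x x'. x \<in> A \<times> L \<Longrightarrow> x' \<in> A \<times> L \<Longrightarrow> dist x' x < \<eta> \<Longrightarrow> dist (F x') (F x) < \<epsilon>"
    unfolding uniformly_continuous_on_def using assms(4) by metis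
  obtain N where N: "N \<subseteq> A" "finite N" "A \<subseteq> (\<Union>n\<in>N. ball n \<eta>)"
    by (rule compactE_image[OF assms(1), of A "\<lambda>n. ball n \<eta>"]) (use \<eta> in auto)
  have "\<exists>n\<in>N. \<forall>p\<in>L. dist (F (a, p)) (F (n, p)) < \<epsilon>" if a: "a \<in> A" for a
  proof -
    obtain n where n: "n \<in> N" "dist n a < \<eta>"
      using N(3) a by auto
    have "dist (F (a, p)) (F (n, p)) < \<epsilon>" if "p \<in> L" for p
      by (rule uc) (use that n N(1) \<open>a \<in> A\<close> in \<open>auto simp: dist_Pair_Pair dist_commute\<close>)
    then show ?thesis
      using n(1) by blast
  qed
  then show ?thesis
    using that N(1,2) by blast
qed

lemma topology_generated_by_eqI:
  assumes "\<And>X. X \<in> \<S> \<Longrightarrow> openin (topology_generated_by \<T>) X"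
    and "\<And>X. X \<in> \<T> \<Longrightarrow> openin (topology_generated_by \<S>) X"
  shows "topology_generated_by \<S> = topology_generated_by \<T>"
proof -
  have gen: "generate_topology_on \<T> X"
    if "generate_topology_on \<S> X" "\<And>X. X \<in> \<S> \<Longrightarrow> generate_topology_on \<T> X" for X \<S> \<T>
    using generate_topology_on_coarsest[OF istopology_generate_topology_on that(2) that(1)] .
  show ?thesis
    unfolding topology_eq openin_topology_generated_by_iff
    using gen assms[unfolded openin_topology_generated_by_iff] by blast
qed

section \<open>Moebius transformations of the disc\<close>

definition disc_moebius :: "complex \<Rightarrow> complex \<Rightarrow> complex \<Rightarrow> complex" where
  "disc_moebius u a z = u * (z - a) / (1 - cnj a * z)"

lemma disc_moebius_eq_Moebius_function: "disc_moebius u a z = u * Moebius_function 0 a z"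
  by (simp add: disc_moebius_def Moebius_function_def)

lemma cnj_mult_self_norm_1: "norm z = 1 \<Longrightarrow> cnj z * z = 1"
  by (metis complex_norm_square mult.commute one_power2 of_real_1)

lemma disc_moebius_denom_nonzero:
  assumes "norm a < 1" "norm z \<le> 1"
  shows "1 - cnj a * z \<noteq> 0"
proof
  assume "1 - cnj a * z = 0"
  then have "norm a * norm z = 1"
    by (metis complex_mod_cnj norm_mult norm_one right_minus_eq)
  moreover have "norm a * norm z \<le> norm a"
    using assms(2) by (simp add: mult_left_le)
  ultimately show False
    using assms(1) by simp
qed

lemma norm_disc_moebius_sphere:
  assumes "norm a < 1" "norm u = 1" "norm z = 1"
  shows "norm (disc_moebius u a z) = 1"
proof -
  have "cnj z * z = 1"
    using assms(3) by (rule cnj_mult_self_norm_1)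
  then have "1 - cnj a * z = z * cnj (z - a)"
    by (simp add: algebra_simps)
  then have "norm (1 - cnj a * z) = norm (z - a)"
    using assms(3) by (simp add: norm_mult complex_cnj_diff[symmetric] del: complex_cnj_diff)
  moreover have "z \<noteq> a"
    using assms by auto
  ultimately show ?thesis
    using assms by (simp add: disc_moebius_def norm_mult norm_divide)
qed

lemma disc_moebius_inverse_left:
  assumes "norm a < 1" "norm u = 1" "norm z \<le> 1"
  shows "disc_moebius (cnj u) (-u * a) (disc_moebius u a z) = z"
proof -
  have den: "1 - cnj a * z \<noteq> 0"
    using disc_moebius_denom_nonzero assms by simp
  have aa: "1 - cnj a * a \<noteq> 0"
    using disc_moebius_denom_nonzero[of a a] assms(1) by simp
  have uu: "cnj u * u = 1"
    using assms(2) by (rule cnj_mult_self_norm_1)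
  have num: "u * (z - a) / (1 - cnj a * z) - (-u * a) = u * z * (1 - cnj a * a) / (1 - cnj a * z)"
    using den by (simp add: field_simps)
  have "cnj (-u * a) * (u * (z - a)) = - cnj a * (z - a)"
    using uu by (simp add: algebra_simps)
  then have denom: "1 - cnj (-u * a) * (u * (z - a) / (1 - cnj a * z)) = (1 - cnj a * a) / (1 - cnj a * z)"
    using den by (simp add: field_simps)
  have "disc_moebius (cnj u) (-u * a) (disc_moebius u a z)
        = cnj u * (u * z * (1 - cnj a * a) / (1 - cnj a * z)) / ((1 - cnj a * a) / (1 - cnj a * z))"
    unfolding disc_moebius_def[of u] unfolding disc_moebius_def num denom ..
  also have "\<dots> = (cnj u * u) * z"
  proof -
    have "x * (y * c / d) / (c / d) = x * y" if "c \<noteq> 0" "d \<noteq> 0" for x y c d :: complex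
      using that by (simp add: field_simps)
    from this[OF aa den, of "cnj u" "u * z"] show ?thesis
      by (simp add: mult.assoc)
  qed
  finally show ?thesis
    using uu by simp
qed

lemma disc_moebius_inverse_right:
  assumes "norm a < 1" "norm u = 1" "norm w \<le> 1"
  shows "disc_moebius u a (disc_moebius (cnj u) (-u * a) w) = w"
proof -
  have "disc_moebius (cnj (cnj u)) (- cnj u * (-u * a)) (disc_moebius (cnj u) (-u * a) w) = w"
    by (rule disc_moebius_inverse_left) (use assms in \<open>auto simp: norm_mult\<close>)
  moreover have "- cnj u * (-u * a) = a"
    using cnj_mult_self_norm_1[OF assms(2)] by (metis minus_mult_minus mult.assoc mult_1)
  ultimately show ?thesis
    by (metis complex_cnj_cnj)
qed

lemma disc_moebius_in_disc_auts:
  assumes "norm a < 1" "norm u = 1"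
  shows "disc_moebius u a \<in> disc_auts"
proof -
  have to_ball: "disc_moebius v b z \<in> ball 0 1" if "norm b < 1" "norm v = 1" "z \<in> ball 0 1" for v b z
    using Moebius_function_norm_lt_1[of b z 0] that
    by (simp add: disc_moebius_eq_Moebius_function norm_mult)
  have "bij_betw (disc_moebius u a) (ball 0 1) (ball 0 1)"
  proof (rule bij_betwI[where g = "disc_moebius (cnj u) (-u * a)"])
    show "disc_moebius u a \<in> ball 0 1 \<rightarrow> ball 0 1" "disc_moebius (cnj u) (-u * a) \<in> ball 0 1 \<rightarrow> ball 0 1"
      using assms to_ball by (auto simp: norm_mult)
  qed (use assms disc_moebius_inverse_left disc_moebius_inverse_right in auto)
  moreover have "disc_moebius u a holomorphic_on ball 0 1"
    unfolding disc_moebius_eq_Moebius_function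
    using Moebius_function_holomorphic[OF assms(1)] by (intro holomorphic_intros)
  moreover have "continuous_on (cball 0 1) (disc_moebius u a)"
    unfolding disc_moebius_def
    by (intro continuous_intros) (use assms(1) disc_moebius_denom_nonzero in auto)
  ultimately show ?thesis
    by (simp add: disc_auts_def)
qed

lemma id_in_disc_auts: "id \<in> disc_auts"
  by (simp add: disc_auts_def continuous_on_id)

lemma disc_auts_comp:
  assumes "\<phi> \<in> disc_auts" "\<psi> \<in> disc_auts"
  shows "\<phi> \<circ> \<psi> \<in> disc_auts"
proof -
  have \<psi>: "\<psi> holomorphic_on ball 0 1" "bij_betw \<psi> (ball 0 1) (ball 0 1)" "continuous_on (cball 0 1) \<psi>"
    and \<phi>: "\<phi> holomorphic_on ball 0 1" "bij_betw \<phi> (ball 0 1) (ball 0 1)" "continuous_on (cball 0 1) \<phi>"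
    using assms by (auto simp: disc_auts_def)
  have image: "\<psi> ` ball 0 1 = ball 0 1"
    using \<psi>(2) by (simp add: bij_betw_def)
  have "\<psi> ` closure (ball 0 1) \<subseteq> closure (ball 0 1)"
    by (rule image_closure_subset) (use \<psi>(3) image closure_subset in auto)
  then have "continuous_on (cball 0 1) (\<phi> \<circ> \<psi>)"
    by (intro continuous_on_compose \<psi>(3) continuous_on_subset[OF \<phi>(3)]) auto
  moreover have "(\<phi> \<circ> \<psi>) holomorphic_on ball 0 1"
    by (rule holomorphic_on_compose[OF \<psi>(1)]) (simp add: image \<phi>(1))
  ultimately show ?thesis
    using bij_betw_trans[OF \<psi>(2) \<phi>(2)] by (simp add: disc_auts_def)
qed

lemma disc_aut_fixing_0_is_rotation:
  assumes "f \<in> disc_auts" "f 0 = 0"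
  obtains u where "norm u = 1" "\<And>z. z \<in> ball 0 1 \<Longrightarrow> f z = u * z"
proof -
  have hol: "f holomorphic_on ball 0 1" and bij: "bij_betw f (ball 0 1) (ball 0 1)"
    using assms(1) by (auto simp: disc_auts_def)
  have image: "f ` ball 0 1 = ball 0 1"
    using bij by (simp add: bij_betw_def)
  obtain g where g_hol: "g holomorphic_on ball 0 1" and g_f: "\<And>z. z \<in> ball 0 1 \<Longrightarrow> g (f z) = z"
    using holomorphic_has_inverse[OF hol open_ball bij_betw_imp_inj_on[OF bij]] image by metis
  have f_g: "f (g w) = w" and g_ball: "g w \<in> ball 0 1" if "w \<in> ball 0 1" for w
    using that g_f image by (metis imageE)+
  have "g 0 = 0"
    using g_f[of 0] assms(2) by simp
  have f_ball: "norm (f z) < 1" if "norm z < 1" for z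
    using that image by auto
  \<comment> \<open>Schwarz's lemma for f and for its inverse forces |f w| = |w| at w = g (1/2)\<close>
  define w where "w = g (1/2)"
  have w: "norm w < 1" "f w = 1/2"
    using f_g g_ball by (simp_all add: w_def)
  have "norm (f w) \<le> norm w"
    by (rule Schwarz_Lemma(1)[OF hol assms(2) f_ball w(1)])
  moreover have "norm w \<le> norm (1/2 :: complex)"
    unfolding w_def using Schwarz_Lemma(1)[OF g_hol \<open>g 0 = 0\<close>, of "1/2"] g_ball by simp
  moreover have "norm (f w) = 1/2"
    by (simp add: w(2) norm_divide)
  ultimately have "norm (f w) = norm w" "w \<noteq> 0"
    by (auto simp: norm_divide)
  then obtain u where "\<forall>z. norm z < 1 \<longrightarrow> f z = u * z" "norm u = 1"
    using Schwarz_Lemma(3)[OF hol assms(2) f_ball w(1)] w(1) by blast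
  then show ?thesis
    using that by simp
qed

lemma disc_aut_eq_disc_moebius:
  assumes "\<phi> \<in> disc_auts" "a \<in> ball 0 1" "\<phi> a = 0"
  obtains u where "norm u = 1" "\<And>z. z \<in> cball 0 1 \<Longrightarrow> \<phi> z = disc_moebius u a z"
proof -
  have a: "norm a < 1" "norm (-a) < 1"
    using assms(2) by simp_all
  have f: "\<phi> \<circ> disc_moebius 1 (-a) \<in> disc_auts"
    by (intro disc_auts_comp assms(1) disc_moebius_in_disc_auts a) simp
  have "(\<phi> \<circ> disc_moebius 1 (-a)) 0 = 0"
    using assms(3) by (simp add: disc_moebius_def)
  then obtain u where u: "norm u = 1" "\<And>z. z \<in> ball 0 1 \<Longrightarrow> \<phi> (disc_moebius 1 (-a) z) = u * z"
    using disc_aut_fixing_0_is_rotation[OF f] by auto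
  have on_ball: "\<phi> z = disc_moebius u a z" if "z \<in> ball 0 1" for z
  proof -
    have "disc_moebius 1 a z \<in> ball 0 1"
      using disc_moebius_in_disc_auts[OF a(1), of 1] that by (auto simp: disc_auts_def bij_betw_def)
    then have "\<phi> (disc_moebius 1 (-a) (disc_moebius 1 a z)) = u * disc_moebius 1 a z"
      by (rule u(2))
    then show ?thesis
      using disc_moebius_inverse_left[OF a(1), of 1 z] that by (simp add: disc_moebius_def)
  qed
  have "continuous_on (closure (ball 0 1)) (\<lambda>z. \<phi> z - disc_moebius u a z)"
    using assms(1) disc_moebius_in_disc_auts[OF a(1) u(1)]
    by (intro continuous_intros) (auto simp: disc_auts_def)
  then have "(\<lambda>z. \<phi> z - disc_moebius u a z) ` closure (ball 0 1) \<subseteq> closure {0}"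
    by (rule image_closure_subset) (use on_ball in auto)
  then have "\<phi> z = disc_moebius u a z" if "z \<in> cball 0 1" for z
    using that by (auto simp: image_subset_iff)
  then show ?thesis
    using that u(1) by blast
qed

lemma disc_aut_has_zero:
  assumes "\<phi> \<in> disc_auts"
  obtains a where "a \<in> ball 0 1" "\<phi> a = 0"
proof -
  have "0 \<in> \<phi> ` ball 0 1"
    using assms by (simp add: disc_auts_def bij_betw_def)
  then show ?thesis
    by (metis that imageE)
qed

section \<open>The action on oriented geodesics\<close>

lemma geod_act_apply: "geod_act g p = (g (fst p), g (snd p))"
  by (cases p) (simp add: geod_act_def)

lemma geod_space_iff: "p \<in> geod_space \<longleftrightarrow> norm (fst p) = 1 \<and> norm (snd p) = 1 \<and> fst p \<noteq> snd p"
  by (cases p) (auto simp: geod_space_def)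

lemma geod_space_subset_cball: "geod_space \<subseteq> cball 0 1 \<times> cball 0 1"
  by (auto simp: geod_space_def)

lemma geod_act_disc_moebius_in_geod_space:
  assumes "norm a < 1" "norm u = 1" "p \<in> geod_space"
  shows "geod_act (disc_moebius u a) p \<in> geod_space"
proof -
  have "disc_moebius u a (fst p) \<noteq> disc_moebius u a (snd p)"
  proof
    assume "disc_moebius u a (fst p) = disc_moebius u a (snd p)"
    then have "disc_moebius (cnj u) (-u * a) (disc_moebius u a (fst p))
               = disc_moebius (cnj u) (-u * a) (disc_moebius u a (snd p))"
      by simp
    then show False
      using disc_moebius_inverse_left[OF assms(1,2)] assms(3) by (simp add: geod_space_iff)
  qed
  then show ?thesis
    using assms norm_disc_moebius_sphere[OF assms(1,2)] by (auto simp: geod_space_iff geod_act_apply)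
qed

lemma geod_act_disc_moebius_inverse:
  assumes "norm a < 1" "norm u = 1" "p \<in> geod_space"
  shows "geod_act (disc_moebius (cnj u) (-u * a)) (geod_act (disc_moebius u a) p) = p"
  using assms disc_moebius_inverse_left[OF assms(1,2)] by (auto simp: geod_space_iff geod_act_apply)

lemma continuous_on_geod_act_disc_moebius_joint:
  "continuous_on ((UNIV \<times> ball 0 1) \<times> (cball 0 1 \<times> cball 0 1))
     (\<lambda>x. geod_act (disc_moebius (fst (fst x)) (snd (fst x))) (snd x))"
  unfolding geod_act_apply disc_moebius_def
  by (intro continuous_intros) (use disc_moebius_denom_nonzero in \<open>auto simp: mem_Times_iff\<close>)

lemma continuous_on_geod_act_disc_moebius:
  assumes "norm a < 1"
  shows "continuous_on geod_space (geod_act (disc_moebius u a))"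
proof -
  have "continuous_on geod_space
          ((\<lambda>x. geod_act (disc_moebius (fst (fst x)) (snd (fst x))) (snd x)) \<circ> (\<lambda>p. ((u, a), p)))"
  proof (rule continuous_on_compose)
    show "continuous_on geod_space (\<lambda>p. ((u, a), p))"
      by (intro continuous_intros)
    show "continuous_on ((\<lambda>p. ((u, a), p)) ` geod_space)
            (\<lambda>x. geod_act (disc_moebius (fst (fst x)) (snd (fst x))) (snd x))"
      by (rule continuous_on_subset[OF continuous_on_geod_act_disc_moebius_joint])
         (use assms geod_space_subset_cball in auto)
  qed
  then show ?thesis
    by (simp add: o_def)
qed

lemma compact_geod_act_disc_moebius_image:
  assumes "compact P" "P \<subseteq> sphere 0 1 \<times> ball 0 1" "compact S" "S \<subseteq> geod_space"
  shows "compact ((\<lambda>x. geod_act (disc_moebius (fst (fst x)) (snd (fst x))) (snd x)) ` (P \<times> S))"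
    and "(\<lambda>x. geod_act (disc_moebius (fst (fst x)) (snd (fst x))) (snd x)) ` (P \<times> S) \<subseteq> geod_space"
proof -
  have "continuous_on (P \<times> S) (\<lambda>x. geod_act (disc_moebius (fst (fst x)) (snd (fst x))) (snd x))"
    by (rule continuous_on_subset[OF continuous_on_geod_act_disc_moebius_joint])
       (use assms(2,4) geod_space_subset_cball in auto)
  then show "compact ((\<lambda>x. geod_act (disc_moebius (fst (fst x)) (snd (fst x))) (snd x)) ` (P \<times> S))"
    by (intro compact_continuous_image compact_Times assms(1,3))
  show "(\<lambda>x. geod_act (disc_moebius (fst (fst x)) (snd (fst x))) (snd x)) ` (P \<times> S) \<subseteq> geod_space"
  proof
    fix y assume "y \<in> (\<lambda>x. geod_act (disc_moebius (fst (fst x)) (snd (fst x))) (snd x)) ` (P \<times> S)"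
    then obtain u a p where "(u, a) \<in> P" "p \<in> S" "y = geod_act (disc_moebius u a) p"
      by auto
    moreover have "norm u = 1" "norm a < 1"
      using \<open>(u, a) \<in> P\<close> assms(2) by auto
    ultimately show "y \<in> geod_space"
      using geod_act_disc_moebius_in_geod_space[of a u p] assms(4) by blast
  qed
qed

lemma geod_act_disc_aut:
  assumes "\<phi> \<in> disc_auts" "a \<in> ball 0 1" "\<phi> a = 0"
  obtains u where "norm u = 1" "\<And>p. p \<in> geod_space \<Longrightarrow> geod_act \<phi> p = geod_act (disc_moebius u a) p"
proof -
  obtain u where u: "norm u = 1" "\<And>z. z \<in> cball 0 1 \<Longrightarrow> \<phi> z = disc_moebius u a z"
    using disc_aut_eq_disc_moebius[OF assms] by blast
  show ?thesis
  proof (rule that[OF u(1)])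
    fix p assume "p \<in> geod_space"
    then have "fst p \<in> cball 0 1" "snd p \<in> cball 0 1"
      using geod_space_subset_cball by auto
    then show "geod_act \<phi> p = geod_act (disc_moebius u a) p"
      using u(2) by (simp add: geod_act_apply)
  qed
qed

lemma geod_act_disc_aut_in_geod_space:
  assumes "\<phi> \<in> disc_auts" "p \<in> geod_space"
  shows "geod_act \<phi> p \<in> geod_space"
proof -
  obtain a where a: "a \<in> ball 0 1" "\<phi> a = 0"
    by (rule disc_aut_has_zero[OF assms(1)])
  obtain u where "norm u = 1" "geod_act \<phi> p = geod_act (disc_moebius u a) p"
    using geod_act_disc_aut[OF assms(1) a] assms(2) by blast
  then show ?thesis
    using geod_act_disc_moebius_in_geod_space a assms(2) by simp
qed

lemma continuous_on_geod_act_disc_aut: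
  assumes "\<phi> \<in> disc_auts"
  shows "continuous_on geod_space (geod_act \<phi>)"
proof -
  obtain a where a: "a \<in> ball 0 1" "\<phi> a = 0"
    by (rule disc_aut_has_zero[OF assms(1)])
  then obtain u where "\<And>p. p \<in> geod_space \<Longrightarrow> geod_act \<phi> p = geod_act (disc_moebius u a) p"
    using geod_act_disc_aut[OF assms(1) a] by metis
  moreover have "continuous_on geod_space (geod_act (disc_moebius u a))"
    using continuous_on_geod_act_disc_moebius a by simp
  ultimately show ?thesis
    using continuous_on_cong by blast
qed

section \<open>Test functions\<close>

lemma cc_test_bounded:
  assumes "cc_test \<xi>"
  obtains B where "\<And>p. p \<in> geod_space \<Longrightarrow> \<bar>\<xi> p\<bar> \<le> B"
proof -
  obtain K where K: "compact K" "K \<subseteq> geod_space" "\<And>p. p \<in> geod_space - K \<Longrightarrow> \<xi> p = 0"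
    and cont: "continuous_on geod_space \<xi>"
    using assms by (auto simp: cc_test_def)
  have "compact (\<xi> ` K)"
    by (rule compact_continuous_image[OF continuous_on_subset[OF cont K(2)] K(1)])
  then have "bounded (insert 0 (\<xi> ` K))"
    by (simp add: compact_imp_bounded)
  moreover have "\<xi> ` geod_space \<subseteq> insert 0 (\<xi> ` K)"
    using K(3) by auto
  ultimately have "bounded (\<xi> ` geod_space)"
    by (rule bounded_subset)
  then show ?thesis
    using that by (auto simp: bounded_real)
qed

lemma cc_test_above_indicator:
  assumes "compact L" "L \<subseteq> geod_space"
  obtains \<psi> where "cc_test \<psi>" "\<And>p. p \<in> geod_space \<Longrightarrow> indicator L p \<le> \<psi> p"
proof -
  let ?X = "sphere (0::complex) 1 \<times> sphere (0::complex) 1"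
  have "?X - geod_space = ?X \<inter> {p. fst p = snd p}"
    by (auto simp: geod_space_iff)
  also have "closed \<dots>"
  proof (rule closed_Int)
    show "closed ?X"
      by (simp add: compact_imp_closed compact_Times)
    show "closed {p :: complex \<times> complex. fst p = snd p}"
      by (rule closed_Collect_eq) (intro continuous_intros)+
  qed
  finally have closed: "closed (?X - geod_space)" .
  have sub: "geod_space \<subseteq> ?X"
    by (auto simp: geod_space_def)
  show ?thesis
  proof (rule bump_above_indicator[OF compact_Times[OF compact_sphere compact_sphere] sub closed assms])
    fix \<psi> :: "complex \<times> complex \<Rightarrow> real" and C
    assume "continuous_on geod_space \<psi>" "compact C" "C \<subseteq> geod_space"
      "\<And>p. p \<in> geod_space - C \<Longrightarrow> \<psi> p = 0" and above: "\<And>p. p \<in> geod_space \<Longrightarrow> indicator L p \<le> \<psi> p"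
    then have "cc_test \<psi>"
      unfolding cc_test_def by blast
    then show thesis
      using that above by blast
  qed
qed

lemma disc_moebius_translates_support:
  assumes "cc_test \<xi>" "compact K" "K \<subseteq> ball 0 1"
  obtains L where "compact L" "L \<subseteq> geod_space"
    "\<And>u k p. norm u = 1 \<Longrightarrow> k \<in> K \<Longrightarrow> p \<in> geod_space - L \<Longrightarrow> \<xi> (geod_act (disc_moebius u k) p) = 0"
proof -
  obtain S where S: "compact S" "S \<subseteq> geod_space" "\<And>p. p \<in> geod_space - S \<Longrightarrow> \<xi> p = 0"
    using assms(1) by (auto simp: cc_test_def)
  have K: "norm k < 1" if "k \<in> K" for k
    using that assms(3) by auto
  \<comment> \<open>L is swept out by the support of \<xi> under the inverse transformations\<close>
  define P where "P = (\<lambda>x. (cnj (fst x), - fst x * snd x)) ` (sphere 0 1 \<times> K)"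
  define L where "L = (\<lambda>x. geod_act (disc_moebius (fst (fst x)) (snd (fst x))) (snd x)) ` (P \<times> S)"
  have P: "compact P" "P \<subseteq> sphere 0 1 \<times> ball 0 1"
    unfolding P_def
    by (intro compact_continuous_image compact_Times compact_sphere assms(2) continuous_intros)
       (use K in \<open>auto simp: norm_mult\<close>)
  have "compact L" "L \<subseteq> geod_space"
    unfolding L_def by (rule compact_geod_act_disc_moebius_image[OF P S(1,2)])+
  moreover have "\<xi> (geod_act (disc_moebius u k) p) = 0"
    if "norm u = 1" "k \<in> K" "p \<in> geod_space - L" for u k p
  proof (rule ccontr)
    let ?q = "geod_act (disc_moebius u k) p"
    assume "\<xi> ?q \<noteq> 0"
    then have "?q \<in> S"
      using S(3) geod_act_disc_moebius_in_geod_space[OF K[OF that(2)] that(1)] that(3) by blast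
    moreover have "(cnj u, - u * k) \<in> P"
      unfolding P_def by (rule image_eqI[where x = "(u, k)"]) (use that(1,2) in auto)
    moreover have "p = geod_act (disc_moebius (cnj u) (- u * k)) ?q"
      using geod_act_disc_moebius_inverse[OF K[OF that(2)] that(1)] that(3) by simp
    ultimately have "p \<in> L"
      unfolding L_def by (intro image_eqI[where x = "((cnj u, - u * k), ?q)"]) auto
    then show False
      using that(3) by blast
  qed
  ultimately show ?thesis
    using that by blast
qed

lemma continuous_on_disc_moebius_family:
  assumes "continuous_on geod_space \<xi>" "K \<subseteq> ball 0 1"
  shows "continuous_on ((sphere 0 1 \<times> K) \<times> geod_space)
           (\<lambda>x. \<xi> (geod_act (disc_moebius (fst (fst x)) (snd (fst x))) (snd x)))"
proof (rule continuous_on_compose2[OF assms(1)])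
  show "continuous_on ((sphere 0 1 \<times> K) \<times> geod_space)
          (\<lambda>x. geod_act (disc_moebius (fst (fst x)) (snd (fst x))) (snd x))"
    by (rule continuous_on_subset[OF continuous_on_geod_act_disc_moebius_joint])
       (use assms(2) geod_space_subset_cball in auto)
  show "(\<lambda>x. geod_act (disc_moebius (fst (fst x)) (snd (fst x))) (snd x)) ` ((sphere 0 1 \<times> K) \<times> geod_space)
          \<subseteq> geod_space"
    using assms(2) geod_act_disc_moebius_in_geod_space by auto
qed

lemma cc_test_comp_disc_moebius:
  assumes "cc_test \<xi>" "norm a < 1" "norm u = 1"
  shows "cc_test (\<xi> \<circ> geod_act (disc_moebius u a))"
proof -
  have "{a} \<subseteq> ball 0 1"
    using assms(2) by simp
  then obtain L where L: "compact L" "L \<subseteq> geod_space"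
    "\<And>v k p. norm v = 1 \<Longrightarrow> k \<in> {a} \<Longrightarrow> p \<in> geod_space - L \<Longrightarrow> \<xi> (geod_act (disc_moebius v k) p) = 0"
    using disc_moebius_translates_support[OF assms(1) compact_sing] by blast
  have "geod_act (disc_moebius u a) ` geod_space \<subseteq> geod_space"
    using geod_act_disc_moebius_in_geod_space[OF assms(2,3)] by blast
  moreover have "continuous_on geod_space \<xi>"
    using assms(1) by (simp add: cc_test_def)
  ultimately have "continuous_on geod_space (\<xi> \<circ> geod_act (disc_moebius u a))"
    using continuous_on_compose[OF continuous_on_geod_act_disc_moebius[OF assms(2)]] continuous_on_subset
    by blast
  then show ?thesis
    unfolding cc_test_def using L(1,2) L(3)[OF assms(3) singletonI] by (intro conjI exI[of _ L]) auto
qed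

section \<open>Geodesic currents\<close>

lemma geodesic_currentsD:
  assumes "\<beta> \<in> geodesic_currents \<Gamma>"
  shows "sets \<beta> = sets (restrict_space borel geod_space)"
    and "\<And>L. compact L \<Longrightarrow> L \<subseteq> geod_space \<Longrightarrow> emeasure \<beta> L < \<infinity>"
    and "\<And>g. g \<in> \<Gamma> \<Longrightarrow> distr \<beta> \<beta> (geod_act g) = \<beta>"
  using assms by (auto simp: geodesic_currents_def)

lemma space_geodesic_current: "\<beta> \<in> geodesic_currents \<Gamma> \<Longrightarrow> space \<beta> = geod_space"
  using sets_eq_imp_space_eq[OF geodesic_currentsD(1)] by (simp add: space_restrict_space)

lemma integrable_cc_test:
  assumes "\<beta> \<in> geodesic_currents \<Gamma>" "cc_test \<xi>"
  shows "integrable \<beta> \<xi>"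
proof -
  obtain S where S: "compact S" "S \<subseteq> geod_space" "\<And>p. p \<in> geod_space - S \<Longrightarrow> \<xi> p = 0"
    and cont: "continuous_on geod_space \<xi>"
    using assms(2) by (auto simp: cc_test_def)
  obtain B where B: "\<And>p. p \<in> geod_space \<Longrightarrow> \<bar>\<xi> p\<bar> \<le> B"
    using cc_test_bounded[OF assms(2)] by blast
  show ?thesis
    by (rule integral_bounded_compact_support(1)[OF geodesic_currentsD(1)[OF assms(1)] S(1,2)
          geodesic_currentsD(2)[OF assms(1) S(1,2)] cont S(3) B])
qed

lemma pairing_diff_le:
  assumes "\<beta> \<in> geodesic_currents \<Gamma>" "cc_test f" "cc_test g" "compact L" "L \<subseteq> geod_space" "0 \<le> \<epsilon>"
    "\<And>p. p \<in> geod_space - L \<Longrightarrow> f p = g p" "\<And>p. p \<in> L \<Longrightarrow> \<bar>f p - g p\<bar> \<le> \<epsilon>"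
  shows "\<bar>pairing \<beta> f - pairing \<beta> g\<bar> \<le> \<epsilon> * measure \<beta> L"
proof -
  have "pairing \<beta> f - pairing \<beta> g = integral\<^sup>L \<beta> (\<lambda>p. f p - g p)"
    using integrable_cc_test[OF assms(1,2)] integrable_cc_test[OF assms(1,3)] by (simp add: pairing_def)
  also have "\<bar>\<dots>\<bar> \<le> \<epsilon> * measure \<beta> L"
  proof (rule integral_bounded_compact_support(2)[OF geodesic_currentsD(1)[OF assms(1)] assms(4,5)
        geodesic_currentsD(2)[OF assms(1,4,5)]])
    show "continuous_on geod_space (\<lambda>p. f p - g p)"
      using assms(2,3) by (intro continuous_on_diff) (simp_all add: cc_test_def)
    show "f p - g p = 0" if "p \<in> geod_space - L" for p
      using assms(7)[OF that] by simp
    show "\<bar>f p - g p\<bar> \<le> \<epsilon>" if "p \<in> geod_space" for p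
      using assms(6,7,8) that by (cases "p \<in> L") auto
  qed
  finally show ?thesis .
qed

lemma measure_le_pairing:
  assumes "\<beta> \<in> geodesic_currents \<Gamma>" "compact L" "L \<subseteq> geod_space"
    "cc_test \<psi>" "\<And>p. p \<in> geod_space \<Longrightarrow> indicator L p \<le> \<psi> p"
  shows "measure \<beta> L \<le> pairing \<beta> \<psi>"
proof -
  have "L \<in> sets borel"
    using assms(2) by (rule borel_compact)
  then have L: "L \<in> sets \<beta>"
    using assms(3) geodesic_currentsD(1)[OF assms(1)] by (auto simp: sets_restrict_space)
  have "measure \<beta> L = integral\<^sup>L \<beta> (indicator L)"
    using L by simp
  also have "\<dots> \<le> integral\<^sup>L \<beta> \<psi>"
    by (rule integral_mono[OF integrable_real_indicator integrable_cc_test])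
       (use L geodesic_currentsD(2)[OF assms(1,2,3)] assms space_geodesic_current in auto)
  finally show ?thesis
    by (simp add: pairing_def)
qed

lemma pairing_invariant:
  assumes "\<beta> \<in> geodesic_currents \<Gamma>" "g \<in> \<Gamma>" "g \<in> disc_auts" "continuous_on geod_space f"
  shows "pairing \<beta> (f \<circ> geod_act g) = pairing \<beta> f"
proof -
  have sets: "sets \<beta> = sets (restrict_space borel geod_space)"
    by (rule geodesic_currentsD(1)[OF assms(1)])
  have "geod_act g \<in> measurable \<beta> \<beta>"
    using geod_act_disc_aut_in_geod_space[OF assms(3)]
    by (intro measurable_continuous_self_map[OF sets] continuous_on_geod_act_disc_aut assms(3)) auto
  then have "integral\<^sup>L (distr \<beta> \<beta> (geod_act g)) f = integral\<^sup>L \<beta> (\<lambda>p. f (geod_act g p))"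
    by (rule integral_distr[OF _ borel_measurable_continuous_on_space[OF sets assms(4)]])
  then show ?thesis
    using geodesic_currentsD(3)[OF assms(1,2)] by (simp add: pairing_def o_def)
qed

lemma measure_bounded_on_weak_star_nhd:
  assumes "\<beta>\<^sub>0 \<in> geodesic_currents \<Gamma>" "compact L" "L \<subseteq> geod_space" "r > 0"
  obtains \<psi> M where "cc_test \<psi>" "0 < M" "measure \<beta>\<^sub>0 L \<le> M"
    "\<And>\<beta>. \<beta> \<in> geodesic_currents \<Gamma> \<Longrightarrow> \<bar>pairing \<beta> \<psi> - pairing \<beta>\<^sub>0 \<psi>\<bar> < r \<Longrightarrow> measure \<beta> L \<le> M"
proof -
  obtain \<psi> where \<psi>: "cc_test \<psi>" "\<And>p. p \<in> geod_space \<Longrightarrow> indicator L p \<le> \<psi> p"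
    using cc_test_above_indicator[OF assms(2,3)] by blast
  have mass: "measure \<beta> L \<le> pairing \<beta> \<psi>" if "\<beta> \<in> geodesic_currents \<Gamma>" for \<beta>
    using measure_le_pairing[OF that assms(2,3) \<psi>] .
  have "0 < pairing \<beta>\<^sub>0 \<psi> + r" "measure \<beta>\<^sub>0 L \<le> pairing \<beta>\<^sub>0 \<psi> + r"
    using mass[OF assms(1)] measure_nonneg[of \<beta>\<^sub>0 L] assms(4) by linarith+
  moreover have "measure \<beta> L \<le> pairing \<beta>\<^sub>0 \<psi> + r"
    if "\<beta> \<in> geodesic_currents \<Gamma>" "\<bar>pairing \<beta> \<psi> - pairing \<beta>\<^sub>0 \<psi>\<bar> < r" for \<beta>
    using mass[OF that(1)] that(2) by arith
  ultimately show ?thesis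
    using that \<psi>(1) by blast
qed

lemma weak_star_basic_open:
  assumes "\<alpha> \<in> C" "cc_test \<xi>" "e > 0"
  shows "openin (weak_star_topology C) {\<beta> \<in> C. \<bar>pairing \<beta> \<xi> - pairing \<alpha> \<xi>\<bar> < e}"
  unfolding weak_star_topology_def by (rule topology_generated_by_Basis) (use assms in blast)

lemma uniform_weak_star_basic_open:
  assumes "\<alpha> \<in> C" "cc_test \<xi>" "e > 0"
  shows "openin (uniform_weak_star_topology C)
    {\<beta> \<in> C. (SUP \<phi>\<in>disc_auts. \<bar>pairing \<beta> (\<xi> \<circ> geod_act \<phi>) - pairing \<alpha> (\<xi> \<circ> geod_act \<phi>)\<bar>) < e}"
  unfolding uniform_weak_star_topology_def by (rule topology_generated_by_Basis) (use assms in blast)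

lemma weak_star_finite_nhd_open:
  assumes "\<alpha> \<in> C" "finite Z" "\<And>\<zeta>. \<zeta> \<in> Z \<Longrightarrow> cc_test \<zeta>" "r > 0"
  shows "openin (weak_star_topology C) {\<beta> \<in> C. \<forall>\<zeta>\<in>Z. \<bar>pairing \<beta> \<zeta> - pairing \<alpha> \<zeta>\<bar> < r}"
  using assms(2,3)
proof (induction Z rule: finite_induct)
  case empty
  have "cc_test (\<lambda>_. 0)"
    unfolding cc_test_def by (auto intro!: exI[of _ "{}"])
  then show ?case
    using weak_star_basic_open[OF assms(1) _ assms(4), of "\<lambda>_. 0"] by (simp add: pairing_def assms(4))
next
  case (insert \<zeta> Z)
  have "{\<beta> \<in> C. \<forall>\<zeta>'\<in>insert \<zeta> Z. \<bar>pairing \<beta> \<zeta>' - pairing \<alpha> \<zeta>'\<bar> < r}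
        = {\<beta> \<in> C. \<bar>pairing \<beta> \<zeta> - pairing \<alpha> \<zeta>\<bar> < r} \<inter> {\<beta> \<in> C. \<forall>\<zeta>'\<in>Z. \<bar>pairing \<beta> \<zeta>' - pairing \<alpha> \<zeta>'\<bar> < r}"
    by auto
  then show ?case
    using insert weak_star_basic_open[OF assms(1) _ assms(4)] by (simp add: openin_Int)
qed

section \<open>Cocompact families of disc automorphisms\<close>

locale cocompact_disc_auts =
  fixes \<Gamma> :: "(complex \<Rightarrow> complex) set" and K :: "complex set"
  assumes auts: "\<Gamma> \<subseteq> disc_auts"
    and compact_K: "compact K"
    and K_subset: "K \<subseteq> ball 0 1"
    and translates_K: "(\<Union>g\<in>\<Gamma>. g ` K) = ball 0 1"
begin

lemma disc_aut_reduce: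
  assumes "\<phi> \<in> disc_auts"
  obtains g u k where "g \<in> \<Gamma>" "norm u = 1" "k \<in> K"
    "\<And>p. p \<in> geod_space \<Longrightarrow> geod_act (\<phi> \<circ> g) p = geod_act (disc_moebius u k) p"
proof -
  obtain a where a: "a \<in> ball 0 1" "\<phi> a = 0"
    by (rule disc_aut_has_zero[OF assms])
  then have "a \<in> (\<Union>g\<in>\<Gamma>. g ` K)"
    using translates_K by simp
  then obtain g k where gk: "g \<in> \<Gamma>" "k \<in> K" "g k = a"
    by auto
  have "\<phi> \<circ> g \<in> disc_auts"
    using disc_auts_comp[OF assms] auts gk(1) by blast
  moreover have "k \<in> ball 0 1" "(\<phi> \<circ> g) k = 0"
    using K_subset gk a by auto
  ultimately obtain u where "norm u = 1"
    "\<And>p. p \<in> geod_space \<Longrightarrow> geod_act (\<phi> \<circ> g) p = geod_act (disc_moebius u k) p"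
    using geod_act_disc_aut by blast
  then show ?thesis
    using that gk by blast
qed

lemma pairing_disc_aut_reduce:
  assumes "\<phi> \<in> disc_auts" "continuous_on geod_space \<xi>"
  obtains u k where "norm u = 1" "k \<in> K"
    "\<And>\<beta>. \<beta> \<in> geodesic_currents \<Gamma> \<Longrightarrow>
       pairing \<beta> (\<xi> \<circ> geod_act \<phi>) = pairing \<beta> (\<xi> \<circ> geod_act (disc_moebius u k))"
proof -
  obtain g u k where guk: "g \<in> \<Gamma>" "norm u = 1" "k \<in> K"
    and red: "\<And>p. p \<in> geod_space \<Longrightarrow> geod_act (\<phi> \<circ> g) p = geod_act (disc_moebius u k) p"
    using disc_aut_reduce[OF assms(1)] by blast
  have "geod_act \<phi> ` geod_space \<subseteq> geod_space"
    using geod_act_disc_aut_in_geod_space[OF assms(1)] by blast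
  then have cont: "continuous_on geod_space (\<xi> \<circ> geod_act \<phi>)"
    by (intro continuous_on_compose continuous_on_geod_act_disc_aut[OF assms(1)]
        continuous_on_subset[OF assms(2)])
  have "pairing \<beta> (\<xi> \<circ> geod_act \<phi>) = pairing \<beta> (\<xi> \<circ> geod_act (disc_moebius u k))"
    if \<beta>: "\<beta> \<in> geodesic_currents \<Gamma>" for \<beta>
  proof -
    have "pairing \<beta> (\<xi> \<circ> geod_act \<phi>) = pairing \<beta> ((\<xi> \<circ> geod_act \<phi>) \<circ> geod_act g)"
      using pairing_invariant[OF \<beta> guk(1) _ cont] auts guk(1) by auto
    also have "\<dots> = pairing \<beta> (\<xi> \<circ> geod_act (disc_moebius u k))"
      unfolding pairing_def
    proof (rule Bochner_Integration.integral_cong[OF refl])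
      fix p assume "p \<in> space \<beta>"
      then have "geod_act \<phi> (geod_act g p) = geod_act (disc_moebius u k) p"
        using red[of p] space_geodesic_current[OF \<beta>] by (simp add: geod_act_apply)
      then show "((\<xi> \<circ> geod_act \<phi>) \<circ> geod_act g) p = (\<xi> \<circ> geod_act (disc_moebius u k)) p"
        by simp
    qed
    finally show ?thesis .
  qed
  then show ?thesis
    using that guk by blast
qed

lemma uniform_pairing_bound:
  assumes "cc_test \<xi>"
  obtains L B where "compact L" "L \<subseteq> geod_space"
    "\<And>\<beta> \<phi>. \<beta> \<in> geodesic_currents \<Gamma> \<Longrightarrow> \<phi> \<in> disc_auts \<Longrightarrow>
       \<bar>pairing \<beta> (\<xi> \<circ> geod_act \<phi>)\<bar> \<le> B * measure \<beta> L"
proof -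
  obtain L where L: "compact L" "L \<subseteq> geod_space"
    and vanish: "\<And>u k p. norm u = 1 \<Longrightarrow> k \<in> K \<Longrightarrow> p \<in> geod_space - L \<Longrightarrow>
                  \<xi> (geod_act (disc_moebius u k) p) = 0"
    using disc_moebius_translates_support[OF assms compact_K K_subset] by blast
  obtain B where B: "\<And>p. p \<in> geod_space \<Longrightarrow> \<bar>\<xi> p\<bar> \<le> B"
    using cc_test_bounded[OF assms] by blast
  have cont: "continuous_on geod_space \<xi>"
    using assms by (simp add: cc_test_def)
  have "\<bar>pairing \<beta> (\<xi> \<circ> geod_act \<phi>)\<bar> \<le> B * measure \<beta> L"
    if \<beta>: "\<beta> \<in> geodesic_currents \<Gamma>" and \<phi>: "\<phi> \<in> disc_auts" for \<beta> \<phi>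
  proof -
    obtain u k where uk: "norm u = 1" "k \<in> K"
      and red: "\<And>\<beta>. \<beta> \<in> geodesic_currents \<Gamma> \<Longrightarrow>
                  pairing \<beta> (\<xi> \<circ> geod_act \<phi>) = pairing \<beta> (\<xi> \<circ> geod_act (disc_moebius u k))"
      using pairing_disc_aut_reduce[OF \<phi> cont] by blast
    have k: "norm k < 1"
      using uk(2) K_subset by auto
    have "\<bar>pairing \<beta> (\<xi> \<circ> geod_act (disc_moebius u k))\<bar> \<le> B * measure \<beta> L"
      unfolding pairing_def
    proof (rule integral_bounded_compact_support(2)[OF geodesic_currentsD(1)[OF \<beta>] L
          geodesic_currentsD(2)[OF \<beta> L]])
      show "continuous_on geod_space (\<xi> \<circ> geod_act (disc_moebius u k))"
        using cc_test_comp_disc_moebius[OF assms k uk(1)] by (simp add: cc_test_def)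
      show "(\<xi> \<circ> geod_act (disc_moebius u k)) p = 0" if "p \<in> geod_space - L" for p
        using vanish[OF uk that] by simp
      show "\<bar>(\<xi> \<circ> geod_act (disc_moebius u k)) p\<bar> \<le> B" if "p \<in> geod_space" for p
        using B geod_act_disc_moebius_in_geod_space[OF k uk(1) that] by simp
    qed
    then show ?thesis
      using red[OF \<beta>] by simp
  qed
  then show ?thesis
    using that L by blast
qed

lemma bounded_currents_eq: "bounded_currents \<Gamma> = geodesic_currents \<Gamma>"
proof -
  have "bdd_above ((\<lambda>\<phi>. \<bar>pairing \<alpha> (\<xi> \<circ> geod_act \<phi>)\<bar>) ` disc_auts)"
    if \<alpha>: "\<alpha> \<in> geodesic_currents \<Gamma>" and \<xi>: "cc_test \<xi>" for \<alpha> \<xi>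
  proof -
    obtain L B where "\<And>\<phi>. \<phi> \<in> disc_auts \<Longrightarrow> \<bar>pairing \<alpha> (\<xi> \<circ> geod_act \<phi>)\<bar> \<le> B * measure \<alpha> L"
      using uniform_pairing_bound[OF \<xi>] \<alpha> by metis
    then show ?thesis
      by (rule bdd_aboveI2)
  qed
  then show ?thesis
    unfolding bounded_currents_def by auto
qed

lemma bdd_above_pairing_diff:
  assumes "cc_test \<xi>" "\<beta> \<in> geodesic_currents \<Gamma>" "\<gamma> \<in> geodesic_currents \<Gamma>"
  shows "bdd_above ((\<lambda>\<phi>. \<bar>pairing \<beta> (\<xi> \<circ> geod_act \<phi>) - pairing \<gamma> (\<xi> \<circ> geod_act \<phi>)\<bar>) ` disc_auts)"
proof -
  obtain L B where bound: "\<And>\<beta> \<phi>. \<beta> \<in> geodesic_currents \<Gamma> \<Longrightarrow> \<phi> \<in> disc_auts \<Longrightarrow>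
      \<bar>pairing \<beta> (\<xi> \<circ> geod_act \<phi>)\<bar> \<le> B * measure \<beta> L"
    using uniform_pairing_bound[OF assms(1)] by metis
  have "\<bar>pairing \<beta> (\<xi> \<circ> geod_act \<phi>) - pairing \<gamma> (\<xi> \<circ> geod_act \<phi>)\<bar> \<le> B * measure \<beta> L + B * measure \<gamma> L"
    if "\<phi> \<in> disc_auts" for \<phi>
    using bound[OF assms(2) that] bound[OF assms(3) that] by linarith
  then show ?thesis
    by (rule bdd_aboveI2)
qed

lemma cc_test_comp_disc_moebius_param:
  assumes "cc_test \<xi>" "(u, k) \<in> sphere 0 1 \<times> K"
  shows "cc_test (\<xi> \<circ> geod_act (disc_moebius u k))"
proof -
  have "norm k < 1" "norm u = 1"
    using assms(2) K_subset by auto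
  then show ?thesis
    by (rule cc_test_comp_disc_moebius[OF assms(1)])
qed

lemma disc_moebius_family_net:
  fixes \<xi> :: "complex \<times> complex \<Rightarrow> real"
  assumes "continuous_on geod_space \<xi>" "\<epsilon> > 0" "compact L" "L \<subseteq> geod_space"
  obtains N where "finite N" "N \<subseteq> sphere 0 1 \<times> K"
    "\<And>u k. norm u = 1 \<Longrightarrow> k \<in> K \<Longrightarrow> \<exists>(v, l)\<in>N. \<forall>p\<in>L.
       \<bar>\<xi> (geod_act (disc_moebius u k) p) - \<xi> (geod_act (disc_moebius v l) p)\<bar> < \<epsilon>"
proof -
  let ?F = "\<lambda>x. \<xi> (geod_act (disc_moebius (fst (fst x)) (snd (fst x))) (snd x))"
  have cont: "continuous_on ((sphere 0 1 \<times> K) \<times> L) ?F"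
    by (rule continuous_on_subset[OF continuous_on_disc_moebius_family[OF assms(1) K_subset]])
       (use assms(4) in auto)
  obtain N where N: "finite N" "N \<subseteq> sphere 0 1 \<times> K"
    and near: "\<And>a. a \<in> sphere 0 1 \<times> K \<Longrightarrow> \<exists>n\<in>N. \<forall>p\<in>L. dist (?F (a, p)) (?F (n, p)) < \<epsilon>"
    using compact_family_finite_net[OF compact_Times[OF compact_sphere compact_K] assms(3) cont assms(2)]
    by blast
  show ?thesis
  proof (rule that[OF N])
    fix u :: complex and k assume "norm u = 1" "k \<in> K"
    then obtain n where "n \<in> N" "\<forall>p\<in>L. dist (?F ((u, k), p)) (?F (n, p)) < \<epsilon>"
      using near[of "(u, k)"] by auto
    then show "\<exists>(v, l)\<in>N. \<forall>p\<in>L.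
        \<bar>\<xi> (geod_act (disc_moebius u k) p) - \<xi> (geod_act (disc_moebius v l) p)\<bar> < \<epsilon>"
      by (cases n) (auto simp: dist_real_def)
  qed
qed

lemma pairing_finite_net:
  assumes "cc_test \<xi>" "\<epsilon> > 0" "compact L" "L \<subseteq> geod_space"
    and vanish: "\<And>u k p. norm u = 1 \<Longrightarrow> k \<in> K \<Longrightarrow> p \<in> geod_space - L \<Longrightarrow>
                  \<xi> (geod_act (disc_moebius u k) p) = 0"
  obtains N where "finite N" "N \<subseteq> sphere 0 1 \<times> K"
    "\<And>\<phi>. \<phi> \<in> disc_auts \<Longrightarrow> \<exists>(v, l)\<in>N. \<forall>\<beta>\<in>geodesic_currents \<Gamma>.
       \<bar>pairing \<beta> (\<xi> \<circ> geod_act \<phi>) - pairing \<beta> (\<xi> \<circ> geod_act (disc_moebius v l))\<bar> \<le> \<epsilon> * measure \<beta> L"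
proof -
  have cont: "continuous_on geod_space \<xi>"
    using assms(1) by (simp add: cc_test_def)
  obtain N where N: "finite N" "N \<subseteq> sphere 0 1 \<times> K"
    and near: "\<And>u k. norm u = 1 \<Longrightarrow> k \<in> K \<Longrightarrow> \<exists>(v, l)\<in>N. \<forall>p\<in>L.
       \<bar>\<xi> (geod_act (disc_moebius u k) p) - \<xi> (geod_act (disc_moebius v l) p)\<bar> < \<epsilon>"
    using disc_moebius_family_net[OF cont assms(2,3,4)] by blast
  have "\<exists>(v, l)\<in>N. \<forall>\<beta>\<in>geodesic_currents \<Gamma>.
          \<bar>pairing \<beta> (\<xi> \<circ> geod_act \<phi>) - pairing \<beta> (\<xi> \<circ> geod_act (disc_moebius v l))\<bar> \<le> \<epsilon> * measure \<beta> L"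
    if \<phi>: "\<phi> \<in> disc_auts" for \<phi>
  proof -
    obtain u k where uk: "norm u = 1" "k \<in> K"
      and red: "\<And>\<beta>. \<beta> \<in> geodesic_currents \<Gamma> \<Longrightarrow>
                  pairing \<beta> (\<xi> \<circ> geod_act \<phi>) = pairing \<beta> (\<xi> \<circ> geod_act (disc_moebius u k))"
      using pairing_disc_aut_reduce[OF \<phi> cont] by blast
    obtain v l where vl: "(v, l) \<in> N"
      and close: "\<And>p. p \<in> L \<Longrightarrow> \<bar>\<xi> (geod_act (disc_moebius u k) p) - \<xi> (geod_act (disc_moebius v l) p)\<bar> < \<epsilon>"
      using near[OF uk] by blast
    have vl': "norm v = 1" "l \<in> K"
      using vl N(2) by auto
    have "\<bar>pairing \<beta> (\<xi> \<circ> geod_act (disc_moebius u k)) - pairing \<beta> (\<xi> \<circ> geod_act (disc_moebius v l))\<bar>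
            \<le> \<epsilon> * measure \<beta> L"
      if \<beta>: "\<beta> \<in> geodesic_currents \<Gamma>" for \<beta>
      using vl N(2) uk less_imp_le[OF close] vanish[OF uk] vanish[OF vl'] assms(2)
      by (intro pairing_diff_le[OF \<beta> cc_test_comp_disc_moebius_param cc_test_comp_disc_moebius_param assms(3,4)])
         (auto simp: assms(1))
    then show ?thesis
      using vl red by auto
  qed
  then show ?thesis
    using that N by blast
qed

lemma weak_star_nhd_uniformly_close:
  assumes "\<beta>\<^sub>0 \<in> geodesic_currents \<Gamma>" "cc_test \<xi>" "\<delta> > 0"
  obtains V where "openin (weak_star_topology (geodesic_currents \<Gamma>)) V" "\<beta>\<^sub>0 \<in> V"
    "V \<subseteq> geodesic_currents \<Gamma>"
    "\<And>\<beta> \<phi>. \<beta> \<in> V \<Longrightarrow> \<phi> \<in> disc_auts \<Longrightarrow>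
       \<bar>pairing \<beta> (\<xi> \<circ> geod_act \<phi>) - pairing \<beta>\<^sub>0 (\<xi> \<circ> geod_act \<phi>)\<bar> < \<delta>"
proof -
  let ?C = "geodesic_currents \<Gamma>"
  obtain L where L: "compact L" "L \<subseteq> geod_space"
    and vanish: "\<And>u k p. norm u = 1 \<Longrightarrow> k \<in> K \<Longrightarrow> p \<in> geod_space - L \<Longrightarrow>
                  \<xi> (geod_act (disc_moebius u k) p) = 0"
    using disc_moebius_translates_support[OF assms(2) compact_K K_subset] by blast
  obtain \<psi> M where \<psi>: "cc_test \<psi>" and M: "0 < M" "measure \<beta>\<^sub>0 L \<le> M"
    and mass: "\<And>\<beta>. \<beta> \<in> ?C \<Longrightarrow> \<bar>pairing \<beta> \<psi> - pairing \<beta>\<^sub>0 \<psi>\<bar> < \<delta> / 4 \<Longrightarrow> measure \<beta> L \<le> M"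
    using measure_bounded_on_weak_star_nhd[OF assms(1) L, of "\<delta> / 4"] assms(3) by auto
  define \<epsilon> where "\<epsilon> = \<delta> / (4 * M)"
  have \<epsilon>: "\<epsilon> > 0" "\<epsilon> * M = \<delta> / 4"
    using M(1) assms(3) by (simp_all add: \<epsilon>_def)
  obtain N where N: "finite N" "N \<subseteq> sphere 0 1 \<times> K"
    and net: "\<And>\<phi>. \<phi> \<in> disc_auts \<Longrightarrow> \<exists>(v, l)\<in>N. \<forall>\<beta>\<in>?C.
       \<bar>pairing \<beta> (\<xi> \<circ> geod_act \<phi>) - pairing \<beta> (\<xi> \<circ> geod_act (disc_moebius v l))\<bar> \<le> \<epsilon> * measure \<beta> L"
    using pairing_finite_net[OF assms(2) \<epsilon>(1) L vanish] by blast
  \<comment> \<open>\<psi> keeps the mass of L under control, the finite net handles all of disc_auts at once\<close>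
  define Z where "Z = insert \<psi> ((\<lambda>(v, l). \<xi> \<circ> geod_act (disc_moebius v l)) ` N)"
  define V where "V = {\<beta> \<in> ?C. \<forall>\<zeta>\<in>Z. \<bar>pairing \<beta> \<zeta> - pairing \<beta>\<^sub>0 \<zeta>\<bar> < \<delta> / 4}"
  have "openin (weak_star_topology ?C) V"
    unfolding V_def using N \<psi> assms(3) cc_test_comp_disc_moebius_param[OF assms(2)]
    by (intro weak_star_finite_nhd_open[OF assms(1)]) (auto simp: Z_def)
  moreover have "\<beta>\<^sub>0 \<in> V" "V \<subseteq> ?C"
    using assms(1,3) by (auto simp: V_def)
  moreover have "\<bar>pairing \<beta> (\<xi> \<circ> geod_act \<phi>) - pairing \<beta>\<^sub>0 (\<xi> \<circ> geod_act \<phi>)\<bar> < \<delta>"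
    if \<beta>: "\<beta> \<in> V" and \<phi>: "\<phi> \<in> disc_auts" for \<beta> \<phi>
  proof -
    have \<beta>C: "\<beta> \<in> ?C"
      using \<beta> by (simp add: V_def)
    have "measure \<beta> L \<le> M"
      using \<beta> mass by (simp add: V_def Z_def)
    then have mass_\<beta>: "\<epsilon> * measure \<beta> L \<le> \<delta> / 4" and mass_\<beta>\<^sub>0: "\<epsilon> * measure \<beta>\<^sub>0 L \<le> \<delta> / 4"
      using mult_left_mono[of _ M \<epsilon>] M(2) \<epsilon> by (metis less_imp_le)+
    obtain v l where "(v, l) \<in> N" and close: "\<forall>\<gamma>\<in>?C.
        \<bar>pairing \<gamma> (\<xi> \<circ> geod_act \<phi>) - pairing \<gamma> (\<xi> \<circ> geod_act (disc_moebius v l))\<bar> \<le> \<epsilon> * measure \<gamma> L"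
      using net[OF \<phi>] by blast
    then have "\<bar>pairing \<beta> (\<xi> \<circ> geod_act (disc_moebius v l)) - pairing \<beta>\<^sub>0 (\<xi> \<circ> geod_act (disc_moebius v l))\<bar>
                 < \<delta> / 4"
      using \<beta> by (auto simp: V_def Z_def)
    moreover have "\<bar>pairing \<beta> (\<xi> \<circ> geod_act \<phi>) - pairing \<beta> (\<xi> \<circ> geod_act (disc_moebius v l))\<bar>
                     \<le> \<epsilon> * measure \<beta> L"
      "\<bar>pairing \<beta>\<^sub>0 (\<xi> \<circ> geod_act \<phi>) - pairing \<beta>\<^sub>0 (\<xi> \<circ> geod_act (disc_moebius v l))\<bar>
         \<le> \<epsilon> * measure \<beta>\<^sub>0 L"
      using close \<beta>C assms(1) by blast+
    ultimately show ?thesis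
      using mass_\<beta> mass_\<beta>\<^sub>0 assms(3) by linarith
  qed
  ultimately show ?thesis
    using that by blast
qed

lemma uniform_basic_open_in_weak_star:
  assumes "\<alpha> \<in> geodesic_currents \<Gamma>" "cc_test \<xi>"
  shows "openin (weak_star_topology (geodesic_currents \<Gamma>))
    {\<beta> \<in> geodesic_currents \<Gamma>.
       (SUP \<phi>\<in>disc_auts. \<bar>pairing \<beta> (\<xi> \<circ> geod_act \<phi>) - pairing \<alpha> (\<xi> \<circ> geod_act \<phi>)\<bar>) < e}"
    (is "openin _ ?U")
  unfolding openin_subopen[of _ ?U]
proof
  fix \<beta>\<^sub>0 assume "\<beta>\<^sub>0 \<in> ?U"
  define d where "d = (SUP \<phi>\<in>disc_auts. \<bar>pairing \<beta>\<^sub>0 (\<xi> \<circ> geod_act \<phi>) - pairing \<alpha> (\<xi> \<circ> geod_act \<phi>)\<bar>)"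
  have \<beta>\<^sub>0: "\<beta>\<^sub>0 \<in> geodesic_currents \<Gamma>" and "d < e"
    using \<open>\<beta>\<^sub>0 \<in> ?U\<close> by (auto simp: d_def)
  obtain V where V: "openin (weak_star_topology (geodesic_currents \<Gamma>)) V" "\<beta>\<^sub>0 \<in> V"
      "V \<subseteq> geodesic_currents \<Gamma>"
    and close: "\<And>\<beta> \<phi>. \<beta> \<in> V \<Longrightarrow> \<phi> \<in> disc_auts \<Longrightarrow>
       \<bar>pairing \<beta> (\<xi> \<circ> geod_act \<phi>) - pairing \<beta>\<^sub>0 (\<xi> \<circ> geod_act \<phi>)\<bar> < (e - d) / 2"
    using weak_star_nhd_uniformly_close[OF \<beta>\<^sub>0 assms(2), of "(e - d) / 2"] \<open>d < e\<close> by auto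
  have "V \<subseteq> ?U"
  proof
    fix \<beta> assume \<beta>: "\<beta> \<in> V"
    have "\<bar>pairing \<beta> (\<xi> \<circ> geod_act \<phi>) - pairing \<alpha> (\<xi> \<circ> geod_act \<phi>)\<bar> \<le> d + (e - d) / 2"
      if \<phi>: "\<phi> \<in> disc_auts" for \<phi>
    proof -
      have "\<bar>pairing \<beta>\<^sub>0 (\<xi> \<circ> geod_act \<phi>) - pairing \<alpha> (\<xi> \<circ> geod_act \<phi>)\<bar> \<le> d"
        unfolding d_def by (rule cSUP_upper[OF \<phi> bdd_above_pairing_diff[OF assms(2) \<beta>\<^sub>0 assms(1)]])
      then show ?thesis
        using close[OF \<beta> \<phi>] by linarith
    qed
    then have "(SUP \<phi>\<in>disc_auts. \<bar>pairing \<beta> (\<xi> \<circ> geod_act \<phi>) - pairing \<alpha> (\<xi> \<circ> geod_act \<phi>)\<bar>)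
                 \<le> d + (e - d) / 2"
      using id_in_disc_auts by (intro cSUP_least) auto
    also have "\<dots> < e"
      using \<open>d < e\<close> by (simp add: field_simps)
    finally show "\<beta> \<in> ?U"
      using \<beta> V(3) by auto
  qed
  then show "\<exists>T. openin (weak_star_topology (geodesic_currents \<Gamma>)) T \<and> \<beta>\<^sub>0 \<in> T \<and> T \<subseteq> ?U"
    using V(1,2) by blast
qed

lemma weak_basic_open_in_uniform:
  assumes "\<alpha> \<in> geodesic_currents \<Gamma>" "cc_test \<xi>"
  shows "openin (uniform_weak_star_topology (geodesic_currents \<Gamma>))
           {\<beta> \<in> geodesic_currents \<Gamma>. \<bar>pairing \<beta> \<xi> - pairing \<alpha> \<xi>\<bar> < e}"
    (is "openin _ ?W")
  unfolding openin_subopen[of _ ?W]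
proof
  fix \<beta>\<^sub>0 assume "\<beta>\<^sub>0 \<in> ?W"
  then have \<beta>\<^sub>0: "\<beta>\<^sub>0 \<in> geodesic_currents \<Gamma>" and e': "e - \<bar>pairing \<beta>\<^sub>0 \<xi> - pairing \<alpha> \<xi>\<bar> > 0"
    by auto
  let ?e' = "e - \<bar>pairing \<beta>\<^sub>0 \<xi> - pairing \<alpha> \<xi>\<bar>"
  let ?U = "{\<beta> \<in> geodesic_currents \<Gamma>.
    (SUP \<phi>\<in>disc_auts. \<bar>pairing \<beta> (\<xi> \<circ> geod_act \<phi>) - pairing \<beta>\<^sub>0 (\<xi> \<circ> geod_act \<phi>)\<bar>) < ?e'}"
  have "disc_auts \<noteq> {}"
    using id_in_disc_auts by blast
  then have "\<beta>\<^sub>0 \<in> ?U"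
    using \<beta>\<^sub>0 e' by (simp add: cSUP_const)
  moreover have "?U \<subseteq> ?W"
  proof
    fix \<beta> assume \<beta>: "\<beta> \<in> ?U"
    have "\<bar>pairing \<beta> (\<xi> \<circ> geod_act id) - pairing \<beta>\<^sub>0 (\<xi> \<circ> geod_act id)\<bar>
          \<le> (SUP \<phi>\<in>disc_auts. \<bar>pairing \<beta> (\<xi> \<circ> geod_act \<phi>) - pairing \<beta>\<^sub>0 (\<xi> \<circ> geod_act \<phi>)\<bar>)"
      using \<beta> \<beta>\<^sub>0 by (intro cSUP_upper id_in_disc_auts bdd_above_pairing_diff assms(2)) auto
    moreover have "\<xi> \<circ> geod_act id = \<xi>"
      by (simp add: fun_eq_iff geod_act_apply)
    ultimately show "\<beta> \<in> ?W"
      using \<beta> by auto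
  qed
  ultimately show "\<exists>T. openin (uniform_weak_star_topology (geodesic_currents \<Gamma>)) T \<and> \<beta>\<^sub>0 \<in> T \<and> T \<subseteq> ?W"
    using uniform_weak_star_basic_open[OF \<beta>\<^sub>0 assms(2) e'] by blast
qed

lemma uniform_weak_star_topology_eq:
  "uniform_weak_star_topology (geodesic_currents \<Gamma>) = weak_star_topology (geodesic_currents \<Gamma>)"
  unfolding uniform_weak_star_topology_def weak_star_topology_def
  by (rule topology_generated_by_eqI)
     (use uniform_basic_open_in_weak_star weak_basic_open_in_uniform in
       \<open>auto simp: uniform_weak_star_topology_def weak_star_topology_def\<close>)

end

theorem proposition2p2:
  fixes \<Gamma> :: "(complex \<Rightarrow> complex) set"
  assumes "cocompact_deck_group \<Gamma>"
  shows "bounded_currents \<Gamma> = geodesic_currents \<Gamma> \<and>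
         uniform_weak_star_topology (bounded_currents \<Gamma>) = weak_star_topology (geodesic_currents \<Gamma>)"
proof -
  obtain K where "compact K" "K \<subseteq> ball 0 1" "(\<Union>g\<in>\<Gamma>. g ` K) = ball 0 1"
    using assms by (auto simp: cocompact_deck_group_def)
  moreover have "\<Gamma> \<subseteq> disc_auts"
    using assms by (simp add: cocompact_deck_group_def)
  ultimately interpret cocompact_disc_auts \<Gamma> K
    by unfold_locales
  show ?thesis
    using bounded_currents_eq uniform_weak_star_topology_eq by simp
qed

end
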